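(* Consider the general load coupling model with JT described in the context. Let $\bm\kappa,\bm\kappa'\in\{0,1\}^{n\times m}$ be JT patterns such that, for some cell $i$ and UE $j$, $\kappa_{ij}=0$, $\kappa'_{ij}=1$, and $\kappa'_{hl}=\kappa_{hl}$ for all $(h,l)\neq(i,j)$. Let $\widetilde{\bm{x}}\in\mathbb{R}^n_{\ge0}$ satisfy $\widetilde{\bm{x}}=\bm{f}^{\bm\kappa}\big(\bm{h}^{\bm\kappa}(\widetilde{\bm{x}})\big)$ and $\bm{x}\in\mathbb{R}^n_{\ge0}$ satisfy $\bm{x}=\bm{f}^{\bm{\kappa'}}\big(\bm{h}^{\bm{\kappa'}}(\bm{x})\big)$. Define the sequence $\bm{x}^{(0)}=\widetilde{\bm{x}}$ and $\bm{x}^{(t)}=\bm{f}^{\bm\kappa}\big(\bm{h}^{\bm{\kappa'}}(\bm{x}^{(t-1)})\big)$ for $t\ge1$. If there exists $k\geq 1$ such that $f^{\bm{\kappa'}}_i\big(\bm{h}^{\bm{\kappa'}}(\bm{x}^{(k)})\big)\leq x^{(k)}_i$, then $\bm{x}\leq\widetilde{\bm{x}}$ componentwise.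
   Context: There are $n$ cells and $m$ UEs. Cell $i$ has transmit power per resource block $p_i>0$, $g_{ij}>0$ is the channel gain between cell $i$ and UE $j$, $d_j>0$ is the (normalized) bitrate demand of UE $j$, and $\sigma^2>0$ is the noise power. A JT pattern is a matrix $\bm\kappa\in\{0,1\}^{n\times m}$, where $\kappa_{ij}=1$ means cell $i$ serves UE $j$; every UE is assumed to be served by at least one cell. For a pattern $\bm\kappa$, the cell load function $\bm f^{\bm\kappa}=(f^{\bm\kappa}_1,\dots,f^{\bm\kappa}_n)$ and SINR function $\bm h^{\bm\kappa}=(h^{\bm\kappa}_1,\dots,h^{\bm\kappa}_m)$ are $f_i^{\bm{\kappa}}(\bm{\gamma})=\sum_{j=1}^{m}\frac{\kappa_{ij}d_j}{\log_2\left(1+\gamma_j\right)}$, $\quad h_j^{\bm{\kappa}}(\bm{x})=\frac{\sum_{i=1}^{n}p_ig_{ij}\kappa_{ij}}{\sum_{k=1}^{n}p_kg_{kj}x_{k}(1-\kappa_{kj})+\sigma^2}$, for $\bm\gamma\in\mathbb{R}^m_{>0}$ and $\bm x\in\mathbb{R}^n_{\ge0}$. A fixed point $\bm x=\bm f^{\bm\kappa}(\bm h^{\bm\kappa}(\bm x))$ is the network-wide cell load vector for pattern $\bm\kappa$. Vector inequalities are componentwise. *)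

theory Defs
  imports "HOL-Analysis.Analysis"
begin

text \<open>Cells are indexed by 0..<n, UEs by 0..<m. A JT pattern is a 0/1 matrix,
  represented as a boolean-valued function kappa i j (true = cell i serves UE j).
  Vectors are functions nat => real; only the indices below n (resp. m) matter.\<close>

definition ind :: "bool \<Rightarrow> real" where
  "ind b = (if b then 1 else 0)"

definition load_f :: "nat \<Rightarrow> (nat \<Rightarrow> real) \<Rightarrow> (nat \<Rightarrow> nat \<Rightarrow> bool) \<Rightarrow> (nat \<Rightarrow> real) \<Rightarrow> nat \<Rightarrow> real" where
  "load_f m d kappa gamma i = (\<Sum>j<m. ind (kappa i j) * d j / log 2 (1 + gamma j))"

definition sinr_h :: "nat \<Rightarrow> (nat \<Rightarrow> real) \<Rightarrow> (nat \<Rightarrow> nat \<Rightarrow> real) \<Rightarrow> real \<Rightarrow> (nat \<Rightarrow> nat \<Rightarrow> bool) \<Rightarrow> (nat \<Rightarrow> real) \<Rightarrow> nat \<Rightarrow> real" where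
  "sinr_h n p g sigma2 kappa x j =
     (\<Sum>i<n. p i * g i j * ind (kappa i j)) /
     ((\<Sum>k<n. p k * g k j * x k * (1 - ind (kappa k j))) + sigma2)"

end

theory Submission
  imports Defs
begin

text \<open>For patterns A, B the map \<open>y \<mapsto> f\<^sup>A(h\<^sup>B(y))\<close> is a standard interference function:
  nonnegative, monotone, and strictly scalable, \<open>f\<^sup>A(h\<^sup>B(\<alpha> y)) < \<alpha> f\<^sup>A(h\<^sup>B(y))\<close> for \<open>\<alpha> > 1\<close>, because
  \<open>log\<^sub>2(1 + \<gamma>)\<close> is concave and the noise does not scale. For such a map every fixed point lies
  below every super-solution \<open>z \<ge> f\<^sup>A(h\<^sup>B(z))\<close>.

  Adding the link (i, j) only increases the SINR, so the iterates x(t) of \<open>f\<^sup>\<kappa> \<circ> h\<^sup>\<kappa>\<^sup>'\<close> start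
  with \<open>x(1) \<le> x(0) = x\<^sup>~\<close> and then decrease by monotonicity. Since \<open>f\<^sup>\<kappa>\<close> and \<open>f\<^sup>\<kappa>\<^sup>'\<close> differ only
  in row i, x(k) is a super-solution of \<open>f\<^sup>\<kappa>\<^sup>' \<circ> h\<^sup>\<kappa>\<^sup>'\<close> in every row but i, and in row i by
  hypothesis. Hence \<open>x \<le> x(k) \<le> x\<^sup>~\<close>.\<close>

abbreviation nonneg_on :: "nat \<Rightarrow> (nat \<Rightarrow> real) \<Rightarrow> bool" where
  "nonneg_on n x \<equiv> \<forall>a<n. 0 \<le> x a"

abbreviation le_on :: "nat \<Rightarrow> (nat \<Rightarrow> real) \<Rightarrow> (nat \<Rightarrow> real) \<Rightarrow> bool" where
  "le_on n x y \<equiv> \<forall>a<n. x a \<le> y a"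

lemma ln_one_plus_div_ge:
  fixes t a :: real
  assumes "0 < t" "1 \<le> a"
  shows "ln (1 + t) / a \<le> ln (1 + t / a)"
proof -
  have "ln (1 + t) / a = (1 - 1/a) * ln 1 + 1/a * ln (1 + t)"
    by simp
  also have "\<dots> \<le> ln ((1 - 1/a) * 1 + 1/a * (1 + t))"
    using concave_onD[OF ln_concave, of "1/a" 1 "1 + t"] assms by simp
  also have "(1 - 1/a) * 1 + 1/a * (1 + t) = 1 + t / a"
    using assms by (simp add: field_simps)
  finally show ?thesis .
qed

lemma log_one_plus_div_ge:
  fixes b t a :: real
  assumes "1 < b" "0 < t" "1 \<le> a"
  shows "log b (1 + t) / a \<le> log b (1 + t / a)"
  using divide_right_mono[OF ln_one_plus_div_ge[OF assms(2,3)], of "ln b"] assms(1)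
  by (simp add: log_def field_simps)

lemma ind_nonneg: "0 \<le> ind b"
  and ind_le_one: "ind b \<le> 1"
  by (auto simp: ind_def)

section \<open>Standard interference functions\<close>

lemma fixed_point_le_supersolution:
  fixes T :: "(nat \<Rightarrow> real) \<Rightarrow> nat \<Rightarrow> real" and active :: "nat \<Rightarrow> bool"
  assumes inactive: "\<And>y a. a < n \<Longrightarrow> \<not> active a \<Longrightarrow> T y a = 0"
    and positive: "\<And>y a. nonneg_on n y \<Longrightarrow> a < n \<Longrightarrow> active a \<Longrightarrow> 0 < T y a"
    and monotone: "\<And>y y' a. nonneg_on n y \<Longrightarrow> le_on n y y' \<Longrightarrow> a < n \<Longrightarrow> T y a \<le> T y' a"
    and scalable: "\<And>y \<alpha> a. nonneg_on n y \<Longrightarrow> a < n \<Longrightarrow> active a \<Longrightarrow> 1 < \<alpha> \<Longrightarrow>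
                     T (\<lambda>k. \<alpha> * y k) a < \<alpha> * T y a"
    and x_nonneg: "nonneg_on n x" and x_fixed: "\<And>a. a < n \<Longrightarrow> x a = T x a"
    and z_nonneg: "nonneg_on n z" and z_super: "le_on n (T z) z"
  shows "le_on n x z"
proof -
  define A where "A = {a. a < n \<and> active a}"
  have z_pos: "0 < z a" if "a \<in> A" for a
    using positive[OF z_nonneg] z_super that unfolding A_def by fastforce
  have x_inactive: "x a = 0" if "a < n" "a \<notin> A" for a
    using x_fixed inactive that unfolding A_def by simp
  \<comment> \<open>the smallest \<open>\<alpha> \<ge> 1\<close> with \<open>x \<le> \<alpha> z\<close>\<close>
  define \<alpha> where "\<alpha> = Max (insert 1 ((\<lambda>a. x a / z a) ` A))"
  have fin: "finite (insert 1 ((\<lambda>a. x a / z a) ` A))"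
    unfolding A_def by simp
  have \<alpha>_ge_1: "1 \<le> \<alpha>"
    unfolding \<alpha>_def using fin by simp
  have x_le: "x a \<le> \<alpha> * z a" if "a < n" for a
  proof (cases "a \<in> A")
    case True
    then have "x a / z a \<le> \<alpha>"
      unfolding \<alpha>_def using fin by (intro Max_ge) auto
    then show ?thesis
      using z_pos[OF True] by (simp add: pos_divide_le_eq)
  next
    case False
    then show ?thesis
      using x_inactive \<alpha>_ge_1 z_nonneg that by simp
  qed
  show ?thesis
  proof (cases "\<alpha> = 1")
    case True
    then show ?thesis using x_le by simp
  next
    case False
    have "\<alpha> \<in> insert 1 ((\<lambda>a. x a / z a) ` A)"
      unfolding \<alpha>_def using fin by (intro Max_in) auto
    then obtain a where a: "a \<in> A" and "\<alpha> = x a / z a"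
      using False by auto
    then have xa: "x a = \<alpha> * z a"
      using z_pos[OF a] by simp
    have an: "a < n" "active a"
      using a unfolding A_def by auto
    have "x a = T x a"
      using x_fixed an by simp
    also have "\<dots> \<le> T (\<lambda>k. \<alpha> * z k) a"
      using monotone[OF x_nonneg _ an(1)] x_le by simp
    also have "\<dots> < \<alpha> * T z a"
      using scalable[OF z_nonneg an] \<alpha>_ge_1 False by simp
    also have "\<dots> \<le> \<alpha> * z a"
      using z_super an \<alpha>_ge_1 by simp
    finally show ?thesis
      using xa by simp
  qed
qed

lemma iterates_antitone:
  fixes T :: "(nat \<Rightarrow> real) \<Rightarrow> nat \<Rightarrow> real"
  assumes monotone: "\<And>y y'. nonneg_on n y \<Longrightarrow> le_on n y y' \<Longrightarrow> le_on n (T y) (T y')"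
    and nonneg: "\<And>y. nonneg_on n y \<Longrightarrow> nonneg_on n (T y)"
    and z_nonneg: "nonneg_on n z" and z_super: "le_on n (T z) z"
  shows "nonneg_on n ((T ^^ k) z)"
    and "le_on n ((T ^^ Suc k) z) ((T ^^ k) z)"
    and "le_on n ((T ^^ k) z) z"
proof -
  show iter_nonneg: "nonneg_on n ((T ^^ k) z)" for k
    by (induction k) (simp_all add: z_nonneg nonneg)
  show iter_step: "le_on n ((T ^^ Suc k) z) ((T ^^ k) z)" for k
  proof (induction k)
    case 0
    then show ?case using z_super by simp
  next
    case (Suc k)
    then show ?case
      using monotone[OF iter_nonneg[of "Suc k"]] by simp
  qed
  show "le_on n ((T ^^ k) z) z"
  proof (induction k)
    case (Suc k)
    then show ?case using iter_step[of k] by force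
  qed simp
qed

lemma load_f_antimono:
  assumes "\<forall>b<m. 0 \<le> d b" and "\<forall>b<m. 0 < \<gamma> b \<and> \<gamma> b \<le> \<gamma>' b"
  shows "load_f m d \<kappa> \<gamma>' a \<le> load_f m d \<kappa> \<gamma> a"
  unfolding load_f_def
proof (rule sum_mono)
  fix b assume "b \<in> {..<m}"
  then have "0 < log 2 (1 + \<gamma> b)" "log 2 (1 + \<gamma> b) \<le> log 2 (1 + \<gamma>' b)"
      "0 \<le> ind (\<kappa> a b) * d b"
    using assms ind_nonneg by auto
  then show "ind (\<kappa> a b) * d b / log 2 (1 + \<gamma>' b) \<le> ind (\<kappa> a b) * d b / log 2 (1 + \<gamma> b)"
    by (intro divide_left_mono mult_pos_pos) auto
qed

lemma load_f_nonneg: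
  assumes "\<forall>b<m. 0 \<le> d b" and "\<forall>b<m. 0 < \<gamma> b"
  shows "0 \<le> load_f m d \<kappa> \<gamma> a"
  unfolding load_f_def
  using assms ind_nonneg by (intro sum_nonneg divide_nonneg_pos mult_nonneg_nonneg) auto

lemma load_f_pos:
  assumes "\<forall>b<m. 0 < d b" and "\<forall>b<m. 0 < \<gamma> b" and "\<exists>b<m. \<kappa> a b"
  shows "0 < load_f m d \<kappa> \<gamma> a"
proof -
  obtain b where "b < m" "\<kappa> a b"
    using assms(3) by blast
  then show ?thesis
    unfolding load_f_def using assms(1,2) ind_nonneg
    by (intro sum_pos2[of _ b]) (auto simp: ind_def less_imp_le)
qed

lemma load_f_eq_0:
  assumes "\<not> (\<exists>b<m. \<kappa> a b)"
  shows "load_f m d \<kappa> \<gamma> a = 0"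
  unfolding load_f_def using assms by (auto simp: ind_def intro!: sum.neutral)

lemma load_f_row_cong:
  assumes "\<forall>b<m. \<kappa> a b = \<kappa>' a b"
  shows "load_f m d \<kappa> \<gamma> a = load_f m d \<kappa>' \<gamma> a"
  unfolding load_f_def using assms by simp

lemma load_f_scaled_lt:
  assumes d_pos: "\<forall>b<m. 0 < d b" and \<gamma>_pos: "\<forall>b<m. 0 < \<gamma> b"
    and \<gamma>'_gt: "\<forall>b<m. \<gamma> b / \<alpha> < \<gamma>' b" and "1 < \<alpha>" and "\<exists>b<m. \<kappa> a b"
  shows "load_f m d \<kappa> \<gamma>' a < \<alpha> * load_f m d \<kappa> \<gamma> a"
  unfolding load_f_def sum_distrib_left
proof (rule sum_strict_mono_ex1)
  have term_le: "c / log 2 (1 + \<gamma>' b) \<le> \<alpha> * (c / log 2 (1 + \<gamma> b))"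
    and term_less: "0 < c \<Longrightarrow> c / log 2 (1 + \<gamma>' b) < \<alpha> * (c / log 2 (1 + \<gamma> b))"
    if "b < m" "0 \<le> c" for b c
  proof -
    have \<gamma>b: "0 < \<gamma> b" and \<gamma>'b: "\<gamma> b / \<alpha> < \<gamma>' b"
      using \<gamma>_pos \<gamma>'_gt \<open>b < m\<close> by auto
    have \<gamma>b_div: "0 < \<gamma> b / \<alpha>"
      using \<gamma>b \<open>1 < \<alpha>\<close> by simp
    have L_pos: "0 < log 2 (1 + \<gamma> b) / \<alpha>"
      using \<gamma>b \<open>1 < \<alpha>\<close> by simp
    have "log 2 (1 + \<gamma> b) / \<alpha> \<le> log 2 (1 + \<gamma> b / \<alpha>)"
      using log_one_plus_div_ge \<gamma>b \<open>1 < \<alpha>\<close> by simp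
    also have "\<dots> < log 2 (1 + \<gamma>' b)"
      using \<gamma>'b \<gamma>b_div by simp
    finally have L_less: "log 2 (1 + \<gamma> b) / \<alpha> < log 2 (1 + \<gamma>' b)" .
    have eq: "\<alpha> * (c / log 2 (1 + \<gamma> b)) = c / (log 2 (1 + \<gamma> b) / \<alpha>)"
      by simp
    show "c / log 2 (1 + \<gamma>' b) \<le> \<alpha> * (c / log 2 (1 + \<gamma> b))"
      unfolding eq using L_pos L_less \<open>0 \<le> c\<close> by (intro divide_left_mono mult_pos_pos) auto
    show "0 < c \<Longrightarrow> c / log 2 (1 + \<gamma>' b) < \<alpha> * (c / log 2 (1 + \<gamma> b))"
      unfolding eq using L_pos L_less by (intro divide_strict_left_mono mult_pos_pos) auto
  qed
  show "\<forall>b\<in>{..<m}. ind (\<kappa> a b) * d b / log 2 (1 + \<gamma>' b)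
      \<le> \<alpha> * (ind (\<kappa> a b) * d b / log 2 (1 + \<gamma> b))"
    using term_le d_pos ind_nonneg by (simp add: less_imp_le)
  obtain b where "b < m" "\<kappa> a b"
    using \<open>\<exists>b<m. \<kappa> a b\<close> by blast
  then show "\<exists>b\<in>{..<m}. ind (\<kappa> a b) * d b / log 2 (1 + \<gamma>' b)
      < \<alpha> * (ind (\<kappa> a b) * d b / log 2 (1 + \<gamma> b))"
    using term_less[of b "d b"] d_pos by (auto simp: ind_def)
qed simp

locale load_coupling =
  fixes n m :: nat and p :: "nat \<Rightarrow> real" and g :: "nat \<Rightarrow> nat \<Rightarrow> real" and d :: "nat \<Rightarrow> real"
    and sigma2 :: real
  assumes p_pos: "\<forall>a<n. 0 < p a"
    and g_pos: "\<forall>a<n. \<forall>b<m. 0 < g a b"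
    and d_pos: "\<forall>b<m. 0 < d b"
    and sigma_pos: "0 < sigma2"
begin

abbreviation served :: "(nat \<Rightarrow> nat \<Rightarrow> bool) \<Rightarrow> bool" where
  "served \<kappa> \<equiv> \<forall>b<m. \<exists>a<n. \<kappa> a b"

abbreviation sinr :: "(nat \<Rightarrow> nat \<Rightarrow> bool) \<Rightarrow> (nat \<Rightarrow> real) \<Rightarrow> nat \<Rightarrow> real" where
  "sinr \<kappa> \<equiv> sinr_h n p g sigma2 \<kappa>"

abbreviation load_map :: "(nat \<Rightarrow> nat \<Rightarrow> bool) \<Rightarrow> (nat \<Rightarrow> nat \<Rightarrow> bool) \<Rightarrow> (nat \<Rightarrow> real) \<Rightarrow> nat \<Rightarrow> real" where
  "load_map \<kappa>\<^sub>A \<kappa>\<^sub>B y \<equiv> load_f m d \<kappa>\<^sub>A (sinr \<kappa>\<^sub>B y)"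

lemma gain_pos: "a < n \<Longrightarrow> b < m \<Longrightarrow> 0 < p a * g a b"
  using p_pos g_pos by simp

lemma interference_nonneg:
  assumes "nonneg_on n y" "b < m"
  shows "0 \<le> (\<Sum>k<n. p k * g k b * y k * (1 - ind (\<kappa> k b)))"
  using assms gain_pos ind_le_one[of "\<kappa> _ b"] by (intro sum_nonneg) (simp add: less_imp_le)

lemma signal_pos:
  assumes "b < m" "\<exists>a<n. \<kappa> a b"
  shows "0 < (\<Sum>a<n. p a * g a b * ind (\<kappa> a b))"
proof -
  obtain a where "a < n" "\<kappa> a b"
    using assms(2) by blast
  then show ?thesis
    using assms(1) gain_pos ind_nonneg by (intro sum_pos2[of _ a]) (auto simp: ind_def less_imp_le)
qed

lemma sinr_pos:
  assumes "served \<kappa>" "nonneg_on n y" "b < m"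
  shows "0 < sinr \<kappa> y b"
  using signal_pos[OF assms(3)] interference_nonneg[OF assms(2,3), where \<kappa> = \<kappa>] assms(1,3) sigma_pos
  unfolding sinr_h_def by simp

lemma sinr_antimono:
  assumes "nonneg_on n y" "le_on n y y'" "b < m"
  shows "sinr \<kappa> y' b \<le> sinr \<kappa> y b"
  unfolding sinr_h_def
proof (rule frac_le)
  show "0 \<le> (\<Sum>a<n. p a * g a b * ind (\<kappa> a b))"
    using assms(3) gain_pos ind_nonneg by (intro sum_nonneg) (simp add: less_imp_le)
  show "0 < (\<Sum>k<n. p k * g k b * y k * (1 - ind (\<kappa> k b))) + sigma2"
    using interference_nonneg[OF assms(1,3), where \<kappa> = \<kappa>] sigma_pos by simp
  have "p k * g k b * y k * (1 - ind (\<kappa> k b)) \<le> p k * g k b * y' k * (1 - ind (\<kappa> k b))"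
    if "k < n" for k
    using assms gain_pos[OF that assms(3)] ind_le_one that
    by (intro mult_right_mono mult_left_mono) auto
  then show "(\<Sum>k<n. p k * g k b * y k * (1 - ind (\<kappa> k b))) + sigma2
      \<le> (\<Sum>k<n. p k * g k b * y' k * (1 - ind (\<kappa> k b))) + sigma2"
    by (intro add_right_mono sum_mono) auto
qed simp

lemma sinr_mono_pattern:
  assumes "\<forall>a<n. \<kappa> a b \<longrightarrow> \<kappa>' a b" "nonneg_on n y" "b < m"
  shows "sinr \<kappa> y b \<le> sinr \<kappa>' y b"
  unfolding sinr_h_def
proof (rule frac_le)
  have ind_le: "ind (\<kappa> a b) \<le> ind (\<kappa>' a b)" if "a < n" for a
    using assms(1) that by (auto simp: ind_def)
  show "0 \<le> (\<Sum>a<n. p a * g a b * ind (\<kappa>' a b))"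
    using assms(3) gain_pos ind_nonneg by (intro sum_nonneg) (simp add: less_imp_le)
  show "(\<Sum>a<n. p a * g a b * ind (\<kappa> a b)) \<le> (\<Sum>a<n. p a * g a b * ind (\<kappa>' a b))"
    using assms(3) gain_pos ind_le by (intro sum_mono) (simp add: less_imp_le mult_left_mono)
  show "0 < (\<Sum>k<n. p k * g k b * y k * (1 - ind (\<kappa>' k b))) + sigma2"
    using interference_nonneg[OF assms(2,3), where \<kappa> = \<kappa>'] sigma_pos by simp
  show "(\<Sum>k<n. p k * g k b * y k * (1 - ind (\<kappa>' k b))) + sigma2
      \<le> (\<Sum>k<n. p k * g k b * y k * (1 - ind (\<kappa> k b))) + sigma2"
  proof (intro add_right_mono sum_mono)
    fix k assume "k \<in> {..<n}"
    then have "0 \<le> p k * g k b * y k" "ind (\<kappa> k b) \<le> ind (\<kappa>' k b)"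
      using assms(2,3) gain_pos ind_le by (auto simp: less_imp_le)
    then show "p k * g k b * y k * (1 - ind (\<kappa>' k b)) \<le> p k * g k b * y k * (1 - ind (\<kappa> k b))"
      by (intro mult_left_mono) auto
  qed
qed

text \<open>Scaling the loads by \<open>\<alpha> > 1\<close> scales the interference but not the noise.\<close>

lemma sinr_scaled_gt:
  assumes "served \<kappa>" "nonneg_on n y" "b < m" "1 < \<alpha>"
  shows "sinr \<kappa> y b / \<alpha> < sinr \<kappa> (\<lambda>k. \<alpha> * y k) b"
proof -
  define S where "S = (\<Sum>a<n. p a * g a b * ind (\<kappa> a b))"
  define I where "I = (\<Sum>k<n. p k * g k b * y k * (1 - ind (\<kappa> k b)))"
  have S: "0 < S" and I: "0 \<le> I"
    unfolding S_def I_def using signal_pos interference_nonneg assms by auto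
  have "(\<Sum>k<n. p k * g k b * (\<alpha> * y k) * (1 - ind (\<kappa> k b))) = \<alpha> * I"
    unfolding I_def sum_distrib_left by (simp add: ac_simps)
  then have scaled: "sinr \<kappa> (\<lambda>k. \<alpha> * y k) b = S / (\<alpha> * I + sigma2)"
    unfolding sinr_h_def S_def by simp
  have "sinr \<kappa> y b / \<alpha> = S / (\<alpha> * I + \<alpha> * sigma2)"
    unfolding sinr_h_def S_def I_def by (simp add: algebra_simps)
  also have "\<dots> < S / (\<alpha> * I + sigma2)"
  proof (intro divide_strict_left_mono mult_pos_pos)
    show "0 < \<alpha> * I + sigma2" "0 < \<alpha> * I + \<alpha> * sigma2"
      using I sigma_pos \<open>1 < \<alpha>\<close> by (simp_all add: add_nonneg_pos add_nonneg_pos)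
  qed (use S sigma_pos \<open>1 < \<alpha>\<close> in auto)
  finally show ?thesis
    unfolding scaled .
qed

lemma load_map_nonneg:
  assumes "served \<kappa>\<^sub>B" "nonneg_on n y"
  shows "0 \<le> load_map \<kappa>\<^sub>A \<kappa>\<^sub>B y a"
  using assms sinr_pos d_pos by (intro load_f_nonneg) (auto simp: less_imp_le)

lemma load_map_mono:
  assumes "served \<kappa>\<^sub>B" "nonneg_on n y" "le_on n y y'"
  shows "load_map \<kappa>\<^sub>A \<kappa>\<^sub>B y a \<le> load_map \<kappa>\<^sub>A \<kappa>\<^sub>B y' a"
proof (rule load_f_antimono)
  have "nonneg_on n y'"
    using assms(2,3) by force
  then show "\<forall>b<m. 0 < sinr \<kappa>\<^sub>B y' b \<and> sinr \<kappa>\<^sub>B y' b \<le> sinr \<kappa>\<^sub>B y b"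
    using sinr_pos[OF assms(1)] sinr_antimono[OF assms(2,3)] by auto
qed (use d_pos in auto)

lemma load_map_antimono_pattern:
  assumes "served \<kappa>" "\<forall>b<m. \<forall>a<n. \<kappa> a b \<longrightarrow> \<kappa>' a b" "nonneg_on n y"
  shows "load_map \<kappa>\<^sub>A \<kappa>' y a \<le> load_map \<kappa>\<^sub>A \<kappa> y a"
proof (rule load_f_antimono)
  have "sinr \<kappa> y b \<le> sinr \<kappa>' y b" if "b < m" for b
    using sinr_mono_pattern[where \<kappa> = \<kappa> and \<kappa>' = \<kappa>'] assms(2,3) that by blast
  then show "\<forall>b<m. 0 < sinr \<kappa> y b \<and> sinr \<kappa> y b \<le> sinr \<kappa>' y b"
    using sinr_pos[OF assms(1,3)] by simp
qed (use d_pos in auto)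

lemma load_map_scaled_lt:
  assumes "served \<kappa>\<^sub>B" "nonneg_on n y" "\<exists>b<m. \<kappa>\<^sub>A a b" "1 < \<alpha>"
  shows "load_map \<kappa>\<^sub>A \<kappa>\<^sub>B (\<lambda>k. \<alpha> * y k) a < \<alpha> * load_map \<kappa>\<^sub>A \<kappa>\<^sub>B y a"
  using assms d_pos sinr_pos[OF assms(1,2)] sinr_scaled_gt[OF assms(1,2) _ assms(4)]
  by (intro load_f_scaled_lt) auto

lemma fixed_point_le_supersolution_load:
  assumes "served \<kappa>"
    and "nonneg_on n x" "\<forall>a<n. x a = load_map \<kappa> \<kappa> x a"
    and "nonneg_on n z" "le_on n (load_map \<kappa> \<kappa> z) z"
  shows "le_on n x z"
proof (rule fixed_point_le_supersolution[where active = "\<lambda>a. \<exists>b<m. \<kappa> a b"])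
  show "0 < load_map \<kappa> \<kappa> y a" if "nonneg_on n y" "\<exists>b<m. \<kappa> a b" for y a
    using load_f_pos[OF d_pos] sinr_pos[OF assms(1) that(1)] that(2) by blast
qed (use assms load_f_eq_0 load_map_mono load_map_scaled_lt in auto)

end

theorem theorem3:
  fixes n m :: nat
    and p :: "nat \<Rightarrow> real" and g :: "nat \<Rightarrow> nat \<Rightarrow> real" and d :: "nat \<Rightarrow> real"
    and sigma2 :: real
    and kappa kappa' :: "nat \<Rightarrow> nat \<Rightarrow> bool"
    and i j :: nat
    and xt x :: "nat \<Rightarrow> real"
  assumes p_pos: "\<forall>a<n. p a > 0"
    and g_pos: "\<forall>a<n. \<forall>b<m. g a b > 0"
    and d_pos: "\<forall>b<m. d b > 0"
    and sigma_pos: "sigma2 > 0"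
    and served: "\<forall>b<m. \<exists>a<n. kappa a b"
    and served': "\<forall>b<m. \<exists>a<n. kappa' a b"
    and ij: "i < n" "j < m"
    and kij: "\<not> kappa i j" and kij': "kappa' i j"
    and same: "\<forall>a<n. \<forall>b<m. (a, b) \<noteq> (i, j) \<longrightarrow> kappa' a b = kappa a b"
    and xt_nonneg: "\<forall>a<n. xt a \<ge> 0"
    and xt_fix: "\<forall>a<n. xt a = load_f m d kappa (sinr_h n p g sigma2 kappa xt) a"
    and x_nonneg: "\<forall>a<n. x a \<ge> 0"
    and x_fix: "\<forall>a<n. x a = load_f m d kappa' (sinr_h n p g sigma2 kappa' x) a"
    and seq: "\<exists>k\<ge>1. load_f m d kappa' (sinr_h n p g sigma2 kappa'
                 (((\<lambda>y. load_f m d kappa (sinr_h n p g sigma2 kappa' y)) ^^ k) xt)) i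
               \<le> (((\<lambda>y. load_f m d kappa (sinr_h n p g sigma2 kappa' y)) ^^ k) xt) i"
  shows "\<forall>a<n. x a \<le> xt a"
proof -
  interpret load_coupling n m p g d sigma2
    using p_pos g_pos d_pos sigma_pos by unfold_locales
  have more_links: "\<forall>b<m. \<forall>a<n. kappa a b \<longrightarrow> kappa' a b"
    using same kij by (metis prod.inject)
  have start: "le_on n (load_map kappa kappa' xt) xt"
    using load_map_antimono_pattern[OF served more_links xt_nonneg] xt_fix by simp
  have F_mono: "le_on n (load_map kappa kappa' y) (load_map kappa kappa' y')"
    if "nonneg_on n y" "le_on n y y'" for y y'
    using load_map_mono[OF served' that] by simp
  have F_nonneg: "nonneg_on n (load_map kappa kappa' y)" if "nonneg_on n y" for y
    using load_map_nonneg[OF served' that] by simp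
  define X where "X t = (load_map kappa kappa' ^^ t) xt" for t
  note iterates = iterates_antitone[where T = "load_map kappa kappa'", OF F_mono F_nonneg xt_nonneg start,
      folded X_def]
  obtain k where row_i: "load_map kappa' kappa' (X k) i \<le> X k i"
    using seq unfolding X_def by blast
  have "load_map kappa' kappa' (X k) a = X (Suc k) a" if "a < n" "a \<noteq> i" for a
    using load_f_row_cong same that unfolding X_def by simp
  then have "le_on n (load_map kappa' kappa' (X k)) (X k)"
    using row_i iterates(2) by (metis order_refl)
  then have "le_on n x (X k)"
    using fixed_point_le_supersolution_load served' x_nonneg x_fix iterates(1) by blast
  then show ?thesis
    using iterates(3) by (meson order_trans)
qed

end
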